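(* Let $(\lambda_1,u_1)$ and $(\lambda_2,u_2)$ be two solution pairs of the system $(PAP-\lambda I)u=-b_0$, $\|u\|=\gamma$, $u\in\mathcal N(C^{\top})$, and let $f(u)=u^{\top}PAPu+2u^{\top}b_0$. Then $\lambda_1<\lambda_2$ if and only if $f(u_1)<f(u_2)$.
   Context: Let $A\in\mathbb{R}^{n\times n}$ be symmetric, $C\in\mathbb{R}^{n\times m}$ ($m<n$) full column rank, $b\in\mathbb{R}^m$, $n_0=C(C^{\top}C)^{-1}b$ with $\|n_0\|<1$, $\gamma=\sqrt{1-\|n_0\|^2}$, $P=I-C(C^{\top}C)^{-1}C^{\top}$ (orthogonal projector onto $\mathcal N(C^{\top})$), $b_0=PAn_0$. *)

theory Defs
  imports "HOL-Analysis.Analysis"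
begin

end

theory Submission
  imports Defs
begin

text \<open>For \<open>u\<^sub>i\<close> in the kernel of \<open>C\<^sup>T\<close> the projector \<open>P\<close> acts as the identity on both sides
  of \<open>A\<close>, so \<open>PAP\<close> behaves like the symmetric matrix \<open>A\<close>. Taking the inner product of the equation
  for \<open>u\<^sub>1\<close> with \<open>u\<^sub>2\<close> and vice versa gives \<open>(\<lambda>\<^sub>2 - \<lambda>\<^sub>1) u\<^sub>1\<^sup>T u\<^sub>2 = (u\<^sub>1 - u\<^sub>2)\<^sup>T b\<^sub>0\<close>, and
  with \<open>f(u\<^sub>i) = \<lambda>\<^sub>i \<gamma>\<^sup>2 + u\<^sub>i\<^sup>T b\<^sub>0\<close> and \<open>\<parallel>u\<^sub>1\<parallel> = \<parallel>u\<^sub>2\<parallel> = \<gamma>\<close> this becomes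
  \<open>f(u\<^sub>2) - f(u\<^sub>1) = (\<lambda>\<^sub>2 - \<lambda>\<^sub>1) \<parallel>u\<^sub>1 - u\<^sub>2\<parallel>\<^sup>2 / 2\<close>. If \<open>u\<^sub>1 = u\<^sub>2 \<noteq> 0\<close> then \<open>\<lambda>\<^sub>1 = \<lambda>\<^sub>2\<close>.\<close>

lemma stationary_value_eq:
  fixes T :: "'a::real_inner \<Rightarrow> 'a"
  assumes "T u = l *\<^sub>R u - b" and "norm u = r"
  shows "u \<bullet> T u + 2 * (u \<bullet> b) = l * r\<^sup>2 + u \<bullet> b"
  using assms by (simp add: inner_diff_right power2_norm_eq_inner[symmetric])

lemma stationary_pair_value_diff:
  fixes T :: "'a::real_inner \<Rightarrow> 'a"
  assumes sym: "u2 \<bullet> T u1 = u1 \<bullet> T u2"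
    and eq1: "T u1 = l1 *\<^sub>R u1 - b" and eq2: "T u2 = l2 *\<^sub>R u2 - b"
    and norm1: "norm u1 = r" and norm2: "norm u2 = r"
  shows "(u2 \<bullet> T u2 + 2 * (u2 \<bullet> b)) - (u1 \<bullet> T u1 + 2 * (u1 \<bullet> b))
    = (l2 - l1) * (norm (u1 - u2))\<^sup>2 / 2"
proof -
  have cross: "(l2 - l1) * (u1 \<bullet> u2) = (u1 - u2) \<bullet> b"
    using sym eq1 eq2 by (simp add: inner_commute algebra_simps)
  have "u1 \<bullet> u1 = r\<^sup>2" "u2 \<bullet> u2 = r\<^sup>2"
    using norm1 norm2 by (metis power2_norm_eq_inner)+
  then have dist: "(norm (u1 - u2))\<^sup>2 = 2 * r\<^sup>2 - 2 * (u1 \<bullet> u2)"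
    by (simp add: power2_norm_eq_inner inner_diff_right inner_diff_left inner_commute)
  show ?thesis
    using stationary_value_eq[of T, OF eq1 norm1] stationary_value_eq[of T, OF eq2 norm2] cross
    unfolding dist by (simp add: algebra_simps)
qed

lemma stationary_pair_less_iff:
  fixes T :: "'a::real_inner \<Rightarrow> 'a"
  assumes sym: "u2 \<bullet> T u1 = u1 \<bullet> T u2"
    and eq1: "T u1 = l1 *\<^sub>R u1 - b" and eq2: "T u2 = l2 *\<^sub>R u2 - b"
    and norm1: "norm u1 = r" and norm2: "norm u2 = r" and "r > 0"
  shows "l1 < l2 \<longleftrightarrow> u1 \<bullet> T u1 + 2 * (u1 \<bullet> b) < u2 \<bullet> T u2 + 2 * (u2 \<bullet> b)"
proof (cases "u1 = u2")
  case True
  have "u1 \<noteq> 0" using norm1 \<open>r > 0\<close> by auto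
  moreover have "l1 *\<^sub>R u1 = l2 *\<^sub>R u1"
    using eq1 eq2 True by auto
  ultimately show ?thesis using True by simp
next
  case False
  then have "(norm (u1 - u2))\<^sup>2 / 2 > 0" by simp
  then show ?thesis
    using stationary_pair_value_diff[OF sym eq1 eq2 norm1 norm2]
    by (metis diff_gt_0_iff_gt times_divide_eq_right zero_less_mult_pos2 mult_pos_pos)
qed

lemma kernel_transpose_orthogonal_range:
  fixes C :: "real^'m^'n"
  assumes "transpose C *v v = 0"
  shows "v \<bullet> (C *v z) = 0"
  using assms by (metis dot_lmul_matrix inner_zero_left transpose_matrix_vector)

lemma complement_projector_apply:
  fixes C :: "real^'m^'n"
  shows "(mat 1 - C ** K ** transpose C) *v x = x - C *v (K *v (transpose C *v x))"
  by (simp add: matrix_vector_mult_diff_rdistrib matrix_vector_mul_assoc[symmetric]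
      del: transpose_matrix_vector)

lemma inner_complement_projector_kernel:
  fixes C :: "real^'m^'n"
  assumes "transpose C *v v = 0"
  shows "v \<bullet> ((mat 1 - C ** K ** transpose C) *v x) = v \<bullet> x"
  using kernel_transpose_orthogonal_range[OF assms] by (simp add: complement_projector_apply inner_diff_right)

lemma inner_compression_kernel:
  fixes C :: "real^'m^'n" and A :: "real^'n^'n"
  assumes P: "P = mat 1 - C ** K ** transpose C"
    and v: "transpose C *v v = 0" and w: "transpose C *v w = 0"
  shows "v \<bullet> ((P ** A ** P) *v w) = v \<bullet> (A *v w)"
proof -
  have "P *v w = w"
    using w P by (simp add: complement_projector_apply)
  then have "(P ** A ** P) *v w = P *v (A *v w)"
    by (metis matrix_vector_mul_assoc)
  then show ?thesis
    using inner_complement_projector_kernel[OF v] P by simp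
qed

lemma inner_symmetric_matrix:
  fixes A :: "real^'n^'n"
  assumes "transpose A = A"
  shows "v \<bullet> (A *v w) = w \<bullet> (A *v v)"
  by (metis assms dot_lmul_matrix inner_commute transpose_matrix_vector)

theorem lemma2p1:
  fixes A :: "real^'n^'n" and C :: "real^'m^'n" and b :: "real^'m"
    and n0 b0 :: "real^'n" and P :: "real^'n^'n" and g :: real
    and f :: "real^'n \<Rightarrow> real"
    and l1 l2 :: real and u1 u2 :: "real^'n"
  assumes symA: "transpose A = A"
    and mn: "CARD('m) < CARD('n)"
    and rankC: "rank C = CARD('m)"
    and n0_def: "n0 = C *v (matrix_inv (transpose C ** C) *v b)"
    and n0_lt: "norm n0 < 1"
    and g_def: "g = sqrt (1 - (norm n0)\<^sup>2)"
    and P_def: "P = mat 1 - C ** matrix_inv (transpose C ** C) ** transpose C"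
    and b0_def: "b0 = P *v (A *v n0)"
    and f_def: "f = (\<lambda>u. u \<bullet> ((P ** A ** P) *v u) + 2 * (u \<bullet> b0))"
    and sol1: "(P ** A ** P - l1 *\<^sub>R mat 1) *v u1 = - b0" "norm u1 = g" "transpose C *v u1 = 0"
    and sol2: "(P ** A ** P - l2 *\<^sub>R mat 1) *v u2 = - b0" "norm u2 = g" "transpose C *v u2 = 0"
  shows "l1 < l2 \<longleftrightarrow> f u1 < f u2"
proof -
  define M where "M = P ** A ** P"
  have shifted: "M *v u = l *\<^sub>R u - b0" if "(M - l *\<^sub>R mat 1) *v u = - b0" for l u
    using that by (simp add: algebra_simps scaleR_matrix_vector_assoc[symmetric])
  have "u2 \<bullet> (M *v u1) = u1 \<bullet> (M *v u2)"
    using inner_compression_kernel[OF P_def] inner_symmetric_matrix[OF symA] sol1(3) sol2(3)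
    unfolding M_def by metis
  moreover have "g > 0"
    using n0_lt g_def by (simp add: abs_square_less_1)
  ultimately show ?thesis
    using stationary_pair_less_iff[of u2 "(*v) M" u1 l1 b0 l2 g] shifted sol1 sol2
    unfolding f_def M_def by simp
qed

end
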